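(* Let $q$ be a prime power, $n\ge 2$ and $1\le i\le n$. Every root of $s_{n,i}(t)$ in an algebraic closure of $\mathbb{F}_q$ lies in $\mathbb{F}_{q^k}$ for some integer $k$ with $n-i+1\le k\le n$.
   Context: For a prime power $q$ and integers $n\ge 1$, $0\le i\le n$, the $i$-th $(n,q)$-elementary symmetric polynomial is $s_{n,i}(t)=\sum_{0\le j_1<j_2<\dots<j_i\le n-1} t^{q^{j_1}+q^{j_2}+\dots+q^{j_i}}\in\mathbb{F}_p[t]$ (where $p$ is the characteristic of $\mathbb{F}_q$). By convention $s_{n,0}(t)=1$. *)

theory Defs
  imports "HOL-Computational_Algebra.Polynomial" "HOL-Computational_Algebra.Primes"
begin

definition qsym_poly :: "nat \<Rightarrow> nat \<Rightarrow> nat \<Rightarrow> 'a::comm_ring_1 poly" where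
  "qsym_poly q n i = (\<Sum>J\<in>{J. J \<subseteq> {0..<n} \<and> card J = i}. monom 1 (\<Sum>j\<in>J. q ^ j))"

definition alg_closed :: "'a::field itself \<Rightarrow> bool" where
  "alg_closed _ \<longleftrightarrow> (\<forall>f :: 'a poly. degree f > 0 \<longrightarrow> (\<exists>x. poly f x = 0))"

end

theory Submission
  imports Defs
begin

text \<open>
  Write E_i(A) for the sum of x^(sum of q^j over j in J) over the i-element subsets J of A,
  so that s_{n,i}(x) = E_i({0..n-1}), and let M = {1..n-1}. Splitting off the index 0 gives
  s_{n,i}(x) = E_i(M) + x E_{i-1}(M). The Frobenius map x |-> x^q shifts every index by one,
  so splitting off the index n gives s_{n,i}(x)^q = E_i(M) + x^(q^n) E_{i-1}(M). Hence a root x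
  of s_{n,i} satisfies (x^(q^n) - x) E_{i-1}(M) = 0, where E_{i-1}(M) = s_{n-1,i-1}(x)^q: either
  x^(q^n) = x, or x is a root of s_{n-1,i-1}. The induction on i stops at s_{n-i,0} = 1, which
  has no roots.
\<close>

lemma add_power_prime_CHAR:
  fixes x y :: "'a::comm_semiring_1"
  assumes "p = CHAR('a)" "prime p"
  shows "(x + y) ^ p = x ^ p + y ^ p"
proof -
  have "(x + y) ^ p = (\<Sum>k\<le>p. of_nat (p choose k) * x ^ k * y ^ (p - k))"
    by (simp add: binomial_ring)
  also have "\<dots> = (\<Sum>k\<in>{0, p}. of_nat (p choose k) * x ^ k * y ^ (p - k))"
  proof (rule sum.mono_neutral_right)
    show "\<forall>k\<in>{..p} - {0, p}. of_nat (p choose k) * x ^ k * y ^ (p - k) = 0"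
    proof
      fix k assume "k \<in> {..p} - {0, p}"
      then have "p dvd (p choose k)"
        using assms(2) by (intro dvd_choose_prime) (auto dest: prime_gt_0_nat)
      then have "of_nat (p choose k) = (0::'a)"
        using assms(1) by (simp add: of_nat_eq_0_iff_char_dvd)
      then show "of_nat (p choose k) * x ^ k * y ^ (p - k) = 0"
        by simp
    qed
  qed auto
  also have "\<dots> = x ^ p + y ^ p"
    using assms(2) by (simp add: prime_gt_0_nat add.commute)
  finally show ?thesis .
qed

lemma sum_power_prime_power_CHAR:
  fixes f :: "'b \<Rightarrow> 'a::comm_semiring_1"
  assumes "p = CHAR('a)" "prime p"
  shows "(sum f A) ^ (p ^ m) = (\<Sum>x\<in>A. f x ^ (p ^ m))"
proof (induction m)
  case (Suc m)
  have "(sum f A) ^ (p ^ Suc m) = ((sum f A) ^ (p ^ m)) ^ p"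
    by (simp add: power_mult[symmetric] mult.commute)
  also have "\<dots> = (\<Sum>x\<in>A. f x ^ (p ^ m)) ^ p"
    by (simp only: Suc)
  also have "\<dots> = (\<Sum>x\<in>A. (f x ^ (p ^ m)) ^ p)"
  proof (induction A rule: infinite_finite_induct)
    case (insert a A)
    then show ?case by (simp add: add_power_prime_CHAR[OF assms])
  qed (simp_all add: zero_power prime_gt_0_nat[OF assms(2)])
  also have "\<dots> = (\<Sum>x\<in>A. f x ^ (p ^ Suc m))"
    by (simp add: power_mult[symmetric] mult.commute)
  finally show ?case .
qed simp

definition qsym_sum :: "nat \<Rightarrow> nat set \<Rightarrow> nat \<Rightarrow> 'a::comm_semiring_1 \<Rightarrow> 'a" where
  "qsym_sum q A i x = (\<Sum>J\<in>{J. J \<subseteq> A \<and> card J = i}. x ^ (\<Sum>j\<in>J. q ^ j))"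

lemma poly_qsym_poly: "poly (qsym_poly q n i) x = qsym_sum q {0..<n} i x"
  by (simp add: qsym_poly_def qsym_sum_def poly_sum poly_monom)

lemma qsym_sum_0:
  assumes "finite A"
  shows "qsym_sum q A 0 x = 1"
proof -
  have "{J. J \<subseteq> A \<and> card J = 0} = {{}}"
    using assms by (auto dest: finite_subset)
  then show ?thesis by (simp add: qsym_sum_def)
qed

lemma subsets_card_Suc_insert:
  assumes "finite A" "a \<notin> A"
  shows "{J. J \<subseteq> insert a A \<and> card J = Suc i}
    = {J. J \<subseteq> A \<and> card J = Suc i} \<union> insert a ` {J. J \<subseteq> A \<and> card J = i}"
    (is "?L = ?S (Suc i) \<union> insert a ` ?S i")
proof (rule set_eqI)
  fix K
  show "K \<in> ?L \<longleftrightarrow> K \<in> ?S (Suc i) \<union> insert a ` ?S i"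
  proof (cases "a \<in> K")
    case True
    have "card K = Suc (card (K - {a}))" if "K - {a} \<subseteq> A"
      using True finite_subset[OF that assms(1)] by (intro card.remove) simp_all
    then have "K \<in> ?L \<longleftrightarrow> K - {a} \<subseteq> A \<and> card (K - {a}) = i"
      using True by (auto simp: subset_insert_iff simp del: card_Diff_insert)
    also have "\<dots> \<longleftrightarrow> K \<in> insert a ` ?S i"
      using True assms(2) by (subst in_image_insert_iff) auto
    also have "\<dots> \<longleftrightarrow> K \<in> ?S (Suc i) \<union> insert a ` ?S i"
      using True assms(2) by blast
    finally show ?thesis .
  next
    case False
    then show ?thesis
      by (auto simp: subset_insert)
  qed
qed

lemma qsym_sum_insert:
  assumes "finite A" "a \<notin> A"
  shows "qsym_sum q (insert a A) (Suc i) x = qsym_sum q A (Suc i) x + x ^ (q ^ a) * qsym_sum q A i x"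
proof -
  let ?S = "\<lambda>k. {J. J \<subseteq> A \<and> card J = k}"
  let ?g = "\<lambda>J. x ^ (\<Sum>j\<in>J. q ^ j)"
  have fin: "finite (?S k)" for k
    by (rule finite_subset[of _ "Pow A"]) (auto simp: assms(1))
  have inj: "inj_on (insert a) (?S i)"
    using assms(2) by (intro inj_onI) (metis Diff_insert_absorb mem_Collect_eq subsetD)
  have "qsym_sum q (insert a A) (Suc i) x = sum ?g (?S (Suc i)) + sum ?g (insert a ` ?S i)"
    unfolding qsym_sum_def subsets_card_Suc_insert[OF assms]
    using assms(2) by (intro sum.union_disjoint fin finite_imageI) auto
  also have "sum ?g (insert a ` ?S i) = (\<Sum>J\<in>?S i. x ^ (q ^ a) * ?g J)"
    unfolding sum.reindex[OF inj]
  proof (rule sum.cong)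
    fix J assume "J \<in> ?S i"
    then have "finite J" "a \<notin> J"
      using assms by (auto dest: finite_subset)
    then show "(?g \<circ> insert a) J = x ^ (q ^ a) * ?g J"
      by (simp add: power_add)
  qed simp
  finally show ?thesis
    by (simp add: qsym_sum_def sum_distrib_left)
qed

lemma qsym_sum_Suc_image:
  "qsym_sum q (Suc ` A) i x = qsym_sum q A i (x ^ q)"
proof -
  have inj: "inj_on (image Suc) {J. J \<subseteq> A \<and> card J = i}"
    by (rule inj_onI) (simp add: inj_image_eq_iff)
  have "{J. J \<subseteq> Suc ` A \<and> card J = i} = image Suc ` {J. J \<subseteq> A \<and> card J = i}"
    by (auto simp: subset_image_iff card_image image_iff)
  then have "qsym_sum q (Suc ` A) i x
      = (\<Sum>J\<in>{J. J \<subseteq> A \<and> card J = i}. x ^ (\<Sum>j\<in>Suc ` J. q ^ j))"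
    unfolding qsym_sum_def by (simp add: sum.reindex[OF inj])
  also have "\<dots> = qsym_sum q A i (x ^ q)"
    unfolding qsym_sum_def
    by (rule sum.cong) (simp_all add: sum.reindex sum_distrib_left[symmetric] power_mult)
  finally show ?thesis .
qed

lemma qsym_sum_power_CHAR:
  fixes x :: "'a::comm_semiring_1"
  assumes "p = CHAR('a)" "prime p" "q = p ^ m"
  shows "qsym_sum q A i x ^ q = qsym_sum q A i (x ^ q)"
  unfolding qsym_sum_def assms(3) sum_power_prime_power_CHAR[OF assms(1,2)]
  by (simp add: power_mult[symmetric] mult.commute)

lemma qsym_sum_root_cases:
  fixes x :: "'a::idom"
  assumes "p = CHAR('a)" "prime p" "q = p ^ m"
    and root: "qsym_sum q {0..<Suc n} (Suc i) x = 0"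
  shows "x ^ (q ^ Suc n) = x \<or> qsym_sum q {0..<n} i x = 0"
proof -
  let ?M = "Suc ` {0..<n}"
  let ?E = "\<lambda>k. qsym_sum q ?M k x"
  have "q > 0"
    using assms(2,3) by (simp add: prime_gt_0_nat)
  have frobenius: "qsym_sum q (Suc ` A) k x = qsym_sum q A k x ^ q" for A k
    by (simp add: qsym_sum_Suc_image qsym_sum_power_CHAR[OF assms(1-3)])
  have "?E (Suc i) + x * ?E i = 0"
    using root qsym_sum_insert[of ?M 0 q i x]
    by (simp add: atLeast0_lessThan_Suc_eq_insert_0 del: image_Suc_atLeastLessThan)
  moreover have "?E (Suc i) + x ^ (q ^ Suc n) * ?E i = 0"
  proof -
    have "Suc ` {0..<Suc n} = insert (Suc n) ?M"
      by auto
    then have "qsym_sum q (insert (Suc n) ?M) (Suc i) x = 0"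
      using root frobenius[of "{0..<Suc n}"] \<open>q > 0\<close> by simp
    then show ?thesis
      using qsym_sum_insert[of ?M "Suc n" q i x] by auto
  qed
  ultimately have "x ^ (q ^ Suc n) * ?E i = x * ?E i"
    by (metis add_left_cancel)
  then have "(x ^ (q ^ Suc n) - x) * ?E i = 0"
    by (simp add: left_diff_distrib)
  moreover have "?E i = qsym_sum q {0..<n} i x ^ q"
    by (rule frobenius)
  ultimately show ?thesis
    using \<open>q > 0\<close> by auto
qed

lemma qsym_sum_root_power_eq:
  fixes x :: "'a::idom"
  assumes "p = CHAR('a)" "prime p" "q = p ^ m"
    and "i \<le> n" "qsym_sum q {0..<n} i x = 0"
  shows "\<exists>k. n - i + 1 \<le> k \<and> k \<le> n \<and> x ^ (q ^ k) = x"
  using assms(4,5)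
proof (induction i arbitrary: n)
  case 0
  then show ?case by (simp add: qsym_sum_0)
next
  case (Suc i)
  then obtain n' where n: "n = Suc n'" and "i \<le> n'"
    by (cases n) auto
  from qsym_sum_root_cases[OF assms(1-3)] Suc.prems(2) n
  consider "x ^ (q ^ n) = x" | "qsym_sum q {0..<n'} i x = 0"
    by blast
  then show ?case
  proof cases
    case 1
    then show ?thesis
      using n by (intro exI[of _ n]) auto
  next
    case 2
    then obtain k where "n' - i + 1 \<le> k" "k \<le> n'" "x ^ (q ^ k) = x"
      using Suc.IH[OF \<open>i \<le> n'\<close>] by blast
    then show ?thesis
      using n by (intro exI[of _ k]) auto
  qed
qed

theorem lemma3p9:
  fixes p m q n i :: nat and x :: "'a::field"
  assumes "prime p" and "m \<ge> 1" and "q = p ^ m"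
    and "CHAR('a) = p"
    and "alg_closed TYPE('a)"
    and "n \<ge> 2" and "1 \<le> i" and "i \<le> n"
    and "poly (qsym_poly q n i) x = 0"
  shows "\<exists>k::nat. n - i + 1 \<le> k \<and> k \<le> n \<and> x ^ (q ^ k) = x"
  using qsym_sum_root_power_eq[OF assms(4)[symmetric] assms(1,3,8)] assms(9)
  by (simp add: poly_qsym_poly)

end
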